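(* Let $I$ be an ideal of a Noetherian ring $A$. Then $$I_>\subseteq\bigcap_{J\in\mathcal{MR}(I)}{}^*J.$$
   Context: $\overline{v}_I(a)=\lim_{n\to\infty}\operatorname{ord}_I(a^n)/n$ where $\operatorname{ord}_I(a)=\max\{n: a\in I^n\}$ ($\infty$ if $a\in\bigcap_nI^n$); $I_>=\{a\in A\mid\overline{v}_I(a)>1\}$. A reduction of $I$ is an ideal $J\subseteq I$ with $\overline{J}=\overline{I}$ (integral closures); $\mathcal{MR}(I)$ is the set of minimal reductions of $I$ (reductions minimal with respect to inclusion). ${}^*J$ is the weak subintegral closure of $J$: $b\in A$ lies in ${}^*J$ if there exist $q\in\mathbb{N}$ and $a_i\in J^i$ ($1\le i\le 2q+1$) with $b^n+\sum_{i=1}^n\binom{n}{i}a_ib^{n-i}=0$ for $q+1\le n\le 2q+1$. *)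

theory Defs
  imports "HOL-Analysis.Analysis" "HOL-Library.Extended_Nat" "HOL-Library.Extended_Real"
begin

definition is_ideal :: "'a::comm_ring_1 set \<Rightarrow> bool" where
  "is_ideal I \<longleftrightarrow> 0 \<in> I \<and> (\<forall>x\<in>I. \<forall>y\<in>I. x + y \<in> I) \<and> (\<forall>r. \<forall>x\<in>I. r * x \<in> I)"

definition ideal_gen :: "'a::comm_ring_1 set \<Rightarrow> 'a set" where
  "ideal_gen S = \<Inter>{J. is_ideal J \<and> S \<subseteq> J}"

definition noetherian_ring :: "'a::comm_ring_1 itself \<Rightarrow> bool" where
  "noetherian_ring _ \<longleftrightarrow> (\<forall>I::'a set. is_ideal I \<longrightarrow> (\<exists>F. finite F \<and> I = ideal_gen F))"

fun ideal_pow :: "'a::comm_ring_1 set \<Rightarrow> nat \<Rightarrow> 'a set" where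
  "ideal_pow I 0 = UNIV"
| "ideal_pow I (Suc n) = ideal_gen {x * y | x y. x \<in> I \<and> y \<in> ideal_pow I n}"

definition ideal_ord :: "'a::comm_ring_1 set \<Rightarrow> 'a \<Rightarrow> enat" where
  "ideal_ord I a = (if \<forall>n. a \<in> ideal_pow I n then \<infinity>
                    else enat (GREATEST n. a \<in> ideal_pow I n))"

definition vbar :: "'a::comm_ring_1 set \<Rightarrow> 'a \<Rightarrow> ereal" where
  "vbar I a = lim (\<lambda>n. ereal_of_enat (ideal_ord I (a ^ n)) / ereal (real n))"

definition I_gt :: "'a::comm_ring_1 set \<Rightarrow> 'a set" where
  "I_gt I = {a. vbar I a > 1}"

definition ideal_int_closure :: "'a::comm_ring_1 set \<Rightarrow> 'a set" where
  "ideal_int_closure I = {b. \<exists>n\<ge>1. \<exists>c::nat \<Rightarrow> 'a.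
      (\<forall>i\<in>{1..n}. c i \<in> ideal_pow I i) \<and>
      b ^ n + (\<Sum>i=1..n. c i * b ^ (n - i)) = 0}"

definition is_reduction :: "'a::comm_ring_1 set \<Rightarrow> 'a set \<Rightarrow> bool" where
  "is_reduction J I \<longleftrightarrow> is_ideal J \<and> J \<subseteq> I \<and> ideal_int_closure J = ideal_int_closure I"

definition min_reductions :: "'a::comm_ring_1 set \<Rightarrow> 'a set set" where
  "min_reductions I = {J. is_reduction J I \<and> (\<forall>K. is_reduction K I \<and> K \<subseteq> J \<longrightarrow> K = J)}"

definition weak_subint_closure :: "'a::comm_ring_1 set \<Rightarrow> 'a set" where
  "weak_subint_closure J = {b. \<exists>q::nat. \<exists>a::nat \<Rightarrow> 'a.
      (\<forall>i\<in>{1..2*q+1}. a i \<in> ideal_pow J i) \<and>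
      (\<forall>n\<in>{q+1..2*q+1}. b ^ n + (\<Sum>i=1..n. of_nat (n choose i) * a i * b ^ (n - i)) = 0)}"

end

theory Submission
  imports Defs "HOL-Library.Multiset"
begin

text \<open>Let \<open>J\<close> be a reduction of \<open>I = (F)\<close> with \<open>F\<close> finite. Every generator is integral
  over \<open>J\<close>; pigeonholing on the monomials of degree \<open>N\<close> in \<open>F\<close> turns these integral
  equations into \<open>I\<^sup>N \<subseteq> J\<^bsup>N-R\<^esup>\<close> for a fixed \<open>R\<close>.
  If \<open>a\<^sup>m \<notin> I\<^bsup>m+1\<^esup>\<close> for all \<open>m \<ge> 1\<close>, then \<open>ord\<^sub>I(a\<^sup>n) \<le> n\<close> and \<open>ord\<^sub>I(a\<^sup>n)\<close> is
  superadditive, so by Fekete's argument \<open>ord\<^sub>I(a\<^sup>n)/n\<close> converges to its supremum,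
  which is at most 1. Hence \<open>vbar I a > 1\<close> gives \<open>a\<^sup>m \<in> I\<^bsup>m+1\<^esup>\<close> for some \<open>m\<close>, and then
  \<open>a\<^sup>n \<in> J\<^sup>n\<close> for all large \<open>n\<close>.
  Finally, if \<open>b\<^sup>n \<in> J\<^sup>n\<close> for all \<open>n > q\<close>, then \<open>b \<in> *J\<close> with witnesses \<open>a\<^sub>i = c\<^sub>i b\<^sup>i\<close>,
  where the integers \<open>c\<^sub>i\<close> vanish for \<open>1 \<le> i \<le> q\<close> and are chosen recursively so that
  \<open>\<Sum>i\<le>n. (n choose i) * c\<^sub>i = 0\<close> for \<open>n > q\<close>.\<close>

lemma is_ideal_UNIV: "is_ideal UNIV"
  by (simp add: is_ideal_def)

lemma ideal_zero: "is_ideal I \<Longrightarrow> 0 \<in> I"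
  by (simp add: is_ideal_def)

lemma ideal_add: "is_ideal I \<Longrightarrow> x \<in> I \<Longrightarrow> y \<in> I \<Longrightarrow> x + y \<in> I"
  by (simp add: is_ideal_def)

lemma ideal_mult_left: "is_ideal I \<Longrightarrow> x \<in> I \<Longrightarrow> r * x \<in> I"
  by (simp add: is_ideal_def)

lemma ideal_mult_right: "is_ideal I \<Longrightarrow> x \<in> I \<Longrightarrow> x * r \<in> I"
  by (metis ideal_mult_left mult.commute)

lemma ideal_uminus: "is_ideal I \<Longrightarrow> x \<in> I \<Longrightarrow> - x \<in> I"
  by (metis ideal_mult_left mult_minus1)

lemma ideal_sum: "is_ideal I \<Longrightarrow> (\<And>i. i \<in> A \<Longrightarrow> f i \<in> I) \<Longrightarrow> sum f A \<in> I"
  by (induction A rule: infinite_finite_induct) (auto simp: ideal_zero ideal_add)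

lemma is_ideal_ideal_gen: "is_ideal (ideal_gen S)"
  unfolding ideal_gen_def is_ideal_def by auto

lemma ideal_gen_superset: "S \<subseteq> ideal_gen S"
  unfolding ideal_gen_def by auto

lemma ideal_gen_least: "is_ideal T \<Longrightarrow> S \<subseteq> T \<Longrightarrow> ideal_gen S \<subseteq> T"
  unfolding ideal_gen_def by auto

lemma ideal_gen_mult_closed:
  assumes U: "is_ideal U" and ST: "\<And>s t. s \<in> S \<Longrightarrow> t \<in> T \<Longrightarrow> s * t \<in> U"
    and x: "x \<in> ideal_gen S" and y: "y \<in> ideal_gen T"
  shows "x * y \<in> U"
proof -
  have "ideal_gen T \<subseteq> {t. s * t \<in> U}" if "s \<in> S" for s
    using ST that U by (intro ideal_gen_least)
      (auto simp: is_ideal_def distrib_left mult.left_commute)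
  then have "ideal_gen S \<subseteq> {s. \<forall>t\<in>ideal_gen T. s * t \<in> U}"
    using U by (intro ideal_gen_least) (auto simp: is_ideal_def distrib_right mult.assoc)
  then show ?thesis
    using x y by blast
qed

lemma is_ideal_ideal_pow: "is_ideal (ideal_pow I n)"
  by (cases n) (auto simp: is_ideal_UNIV is_ideal_ideal_gen)

lemma ideal_pow_Suc_mult: "x \<in> I \<Longrightarrow> y \<in> ideal_pow I n \<Longrightarrow> x * y \<in> ideal_pow I (Suc n)"
  using ideal_gen_superset by fastforce

lemma ideal_pow_mult: "x \<in> ideal_pow I p \<Longrightarrow> y \<in> ideal_pow I q \<Longrightarrow> x * y \<in> ideal_pow I (p + q)"
proof (induction p arbitrary: x y)
  case 0
  then show ?case
    by (simp add: ideal_mult_left is_ideal_ideal_pow)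
next
  case (Suc p)
  have prod: "s * w \<in> ideal_pow I (Suc p + q)"
    if s: "s \<in> {u * v | u v. u \<in> I \<and> v \<in> ideal_pow I p}" and w: "w \<in> ideal_pow I q" for s w
  proof -
    obtain u v where uv: "s = u * v" "u \<in> I" "v \<in> ideal_pow I p"
      using s by blast
    have "u * (v * w) \<in> ideal_pow I (Suc (p + q))"
      by (rule ideal_pow_Suc_mult[OF uv(2) Suc.IH[OF uv(3) w]])
    then show ?thesis
      by (simp add: uv(1) mult.assoc)
  qed
  have x: "x \<in> ideal_gen {u * v | u v. u \<in> I \<and> v \<in> ideal_pow I p}"
    using Suc.prems(1) by simp
  have y: "y \<in> ideal_gen (ideal_pow I q)"
    using Suc.prems(2) ideal_gen_superset by blast
  show ?case
    using is_ideal_ideal_pow prod x y by (rule ideal_gen_mult_closed)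
qed

lemma ideal_pow_Suc_subset: "ideal_pow I (Suc n) \<subseteq> ideal_pow I n"
  unfolding ideal_pow.simps(2)
  by (rule ideal_gen_least) (auto simp: is_ideal_ideal_pow ideal_mult_left)

lemma ideal_pow_antimono: "m \<le> n \<Longrightarrow> ideal_pow I n \<subseteq> ideal_pow I m"
  by (induction n rule: dec_induct) (use ideal_pow_Suc_subset in blast)+

lemma ideal_pow_one:
  assumes I: "is_ideal I"
  shows "ideal_pow I 1 = I"
proof
  show "ideal_pow I 1 \<subseteq> I"
    unfolding One_nat_def ideal_pow.simps
    by (rule ideal_gen_least[OF I]) (auto simp: ideal_mult_right[OF I])
  show "I \<subseteq> ideal_pow I 1"
    using ideal_pow_Suc_mult[of _ I 1 0] by auto
qed

lemma power_in_ideal_pow: "x \<in> ideal_pow I k \<Longrightarrow> x ^ t \<in> ideal_pow I (t * k)"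
  by (induction t) (auto dest: ideal_pow_mult)

lemma power_div_in_ideal_pow:
  assumes "a ^ m \<in> ideal_pow I k"
  shows "a ^ n \<in> ideal_pow I (n div m * k)"
proof -
  have "a ^ n = (a ^ m) ^ (n div m) * a ^ (n mod m)"
    by (metis power_add power_mult div_mult_mod_eq mult.commute)
  then show ?thesis
    using ideal_mult_right[OF is_ideal_ideal_pow power_in_ideal_pow[OF assms]] by simp
qed

definition monomials :: "'a::comm_ring_1 set \<Rightarrow> nat \<Rightarrow> 'a set" where
  "monomials F N = {prod_mset \<alpha> | \<alpha>. set_mset \<alpha> \<subseteq> F \<and> size \<alpha> = N}"

lemma mult_monomials:
  assumes "f \<in> F" "m \<in> monomials F N"
  shows "f * m \<in> monomials F (Suc N)"
proof -
  obtain \<alpha> where "m = prod_mset \<alpha>" "set_mset \<alpha> \<subseteq> F" "size \<alpha> = N"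
    using assms(2) unfolding monomials_def by blast
  then show ?thesis
    using assms(1) unfolding monomials_def
    by (intro CollectI exI[of _ "add_mset f \<alpha>"]) simp
qed

lemma ideal_pow_ideal_gen_subset: "ideal_pow (ideal_gen F) N \<subseteq> ideal_gen (monomials F N)"
proof (induction N)
  case 0
  have "1 \<in> ideal_gen (monomials F 0)"
    using ideal_gen_superset by (force simp: monomials_def)
  then show ?case
    using ideal_mult_right[OF is_ideal_ideal_gen] by fastforce
next
  case (Suc N)
  have "x * y \<in> ideal_gen (monomials F (Suc N))"
    if "x \<in> ideal_gen F" "y \<in> ideal_gen (monomials F N)" for x y
    using is_ideal_ideal_gen _ that
  proof (rule ideal_gen_mult_closed)
    show "f * m \<in> ideal_gen (monomials F (Suc N))" if "f \<in> F" "m \<in> monomials F N" for f m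
      using mult_monomials[OF that] ideal_gen_superset by blast
  qed
  then show ?case
    unfolding ideal_pow.simps(2) using Suc.IH
    by (intro ideal_gen_least[OF is_ideal_ideal_gen]) blast
qed

lemma integral_equation_mult_in_pow:
  assumes c: "\<And>i. i \<in> {1..n} \<Longrightarrow> c i \<in> ideal_pow J i"
    and eq: "x ^ n + (\<Sum>i=1..n. c i * x ^ (n - i)) = 0"
    and lower: "\<And>i. i \<in> {1..n} \<Longrightarrow> x ^ (n - i) * p \<in> ideal_pow J (k - i)"
  shows "x ^ n * p \<in> ideal_pow J k"
proof -
  have "c i * (x ^ (n - i) * p) \<in> ideal_pow J k" if "i \<in> {1..n}" for i
  proof -
    have "k \<le> i + (k - i)"
      by simp
    then show ?thesis
      using ideal_pow_mult[OF c[OF that] lower[OF that]] ideal_pow_antimono by blast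
  qed
  then have "- (\<Sum>i=1..n. c i * (x ^ (n - i) * p)) \<in> ideal_pow J k"
    by (intro ideal_uminus[OF is_ideal_ideal_pow] ideal_sum[OF is_ideal_ideal_pow])
  moreover have "x ^ n = - (\<Sum>i=1..n. c i * x ^ (n - i))"
    using eq by (simp add: eq_neg_iff_add_eq_0)
  then have "x ^ n * p = - (\<Sum>i=1..n. c i * (x ^ (n - i) * p))"
    by (simp add: sum_distrib_right mult.assoc)
  ultimately show ?thesis
    by simp
qed

lemma multiset_pigeonhole:
  assumes "finite F" "set_mset \<alpha> \<subseteq> F" "(\<Sum>x\<in>F. f x) < size \<alpha>"
  shows "\<exists>x\<in>F. f x < count \<alpha> x"
proof (rule ccontr)
  assume none: "\<not> ?thesis"
  have "size \<alpha> = (\<Sum>x\<in>set_mset \<alpha>. count \<alpha> x)"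
    by (rule size_multiset_overloaded_eq)
  also have "\<dots> = (\<Sum>x\<in>F. count \<alpha> x)"
    by (rule sum.mono_neutral_left[OF assms(1,2)]) (simp add: not_in_iff)
  also have "\<dots> \<le> (\<Sum>x\<in>F. f x)"
    using none by (auto intro!: sum_mono simp: not_less)
  finally show False
    using assms(3) by simp
qed

lemma prod_mset_in_ideal_pow_diff:
  assumes fin: "finite F"
    and c: "\<And>x i. x \<in> F \<Longrightarrow> i \<in> {1..n x} \<Longrightarrow> c x i \<in> ideal_pow J i"
    and eq: "\<And>x. x \<in> F \<Longrightarrow> x ^ n x + (\<Sum>i=1..n x. c x i * x ^ (n x - i)) = 0"
  shows "set_mset \<alpha> \<subseteq> F \<Longrightarrow> prod_mset \<alpha> \<in> ideal_pow J (size \<alpha> - (\<Sum>x\<in>F. n x - 1))"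
proof (induction "size \<alpha>" arbitrary: \<alpha> rule: less_induct)
  case less
  define R where "R = (\<Sum>x\<in>F. n x - 1)"
  show ?case
  proof (cases "size \<alpha> \<le> R")
    case True
    then show ?thesis
      by (simp add: R_def)
  next
    case False
    then obtain x where x: "x \<in> F" "n x - 1 < count \<alpha> x"
      using multiset_pigeonhole[OF fin less.prems, of "\<lambda>x. n x - 1"] by (auto simp: R_def)
    define \<beta> where "\<beta> = \<alpha> - replicate_mset (n x) x"
    have "replicate_mset (n x) x \<subseteq># \<alpha>"
      using x(2) by (simp flip: count_le_replicate_mset_subset_eq)
    then have \<alpha>: "\<alpha> = replicate_mset (n x) x + \<beta>"
      unfolding \<beta>_def by (simp add: subset_mset.add_diff_inverse)
    have \<beta>F: "set_mset \<beta> \<subseteq> F"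
      using less.prems by (auto simp: \<beta>_def dest: in_diffD)
    have "x ^ (n x - i) * prod_mset \<beta> \<in> ideal_pow J (size \<alpha> - R - i)"
      if "i \<in> {1..n x}" for i
    proof -
      define \<gamma> where "\<gamma> = replicate_mset (n x - i) x + \<beta>"
      have "size \<gamma> < size \<alpha>" "set_mset \<gamma> \<subseteq> F"
        using that x(1) \<beta>F by (subst \<alpha>, auto simp: \<gamma>_def)
      then have "prod_mset \<gamma> \<in> ideal_pow J (size \<gamma> - R)"
        using less.hyps by (simp add: R_def)
      moreover have "size \<gamma> - R = size \<alpha> - R - i"
        using that by (subst \<alpha>) (simp add: \<gamma>_def)
      ultimately show ?thesis
        by (simp add: \<gamma>_def)
    qed
    then have "x ^ n x * prod_mset \<beta> \<in> ideal_pow J (size \<alpha> - R)"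
      using integral_equation_mult_in_pow[OF c eq] x(1) by blast
    then show ?thesis
      by (subst \<alpha>) (simp add: R_def)
  qed
qed

lemma pow_subset_shifted_pow_if_integral:
  assumes fin: "finite F" and int: "F \<subseteq> ideal_int_closure J"
  shows "\<exists>R. \<forall>N. ideal_pow (ideal_gen F) N \<subseteq> ideal_pow J (N - R)"
proof -
  obtain n c where c: "\<And>x i. x \<in> F \<Longrightarrow> i \<in> {1..n x} \<Longrightarrow> c x i \<in> ideal_pow J i"
    and eq: "\<And>x. x \<in> F \<Longrightarrow> x ^ n x + (\<Sum>i=1..n x. c x i * x ^ (n x - i)) = 0"
    using int unfolding ideal_int_closure_def subset_iff mem_Collect_eq by metis
  have "ideal_gen (monomials F N) \<subseteq> ideal_pow J (N - (\<Sum>x\<in>F. n x - 1))" for N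
    using prod_mset_in_ideal_pow_diff[OF fin c eq]
    by (intro ideal_gen_least[OF is_ideal_ideal_pow]) (auto simp: monomials_def)
  then show ?thesis
    using ideal_pow_ideal_gen_subset by blast
qed

lemma ideal_subset_int_closure: "is_ideal I \<Longrightarrow> I \<subseteq> ideal_int_closure I"
proof
  fix b assume I: "is_ideal I" and b: "b \<in> I"
  have "- b \<in> ideal_pow I 1"
    unfolding ideal_pow_one[OF I] using ideal_uminus[OF I b] .
  then show "b \<in> ideal_int_closure I"
    unfolding ideal_int_closure_def by (intro CollectI exI[of _ 1] conjI exI[of _ "\<lambda>_. - b"]) auto
qed

lemma ideal_pow_Greatest:
  assumes "x \<notin> ideal_pow I N"
  shows "x \<in> ideal_pow I (GREATEST k. x \<in> ideal_pow I k)"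
    and "x \<in> ideal_pow I k \<Longrightarrow> k \<le> (GREATEST k. x \<in> ideal_pow I k)"
    and "(GREATEST k. x \<in> ideal_pow I k) < N"
proof -
  have bound: "k < N" if "x \<in> ideal_pow I k" for k
  proof (rule ccontr)
    assume "\<not> k < N"
    then have "ideal_pow I k \<subseteq> ideal_pow I N"
      by (simp add: ideal_pow_antimono)
    then show False
      using assms that by blast
  qed
  show "x \<in> ideal_pow I (GREATEST k. x \<in> ideal_pow I k)"
    by (rule GreatestI_nat[where P = "\<lambda>k. x \<in> ideal_pow I k" and k = 0 and b = N])
      (auto dest: bound)
  then show "(GREATEST k. x \<in> ideal_pow I k) < N"
    by (rule bound)
  show "k \<le> (GREATEST k. x \<in> ideal_pow I k)" if "x \<in> ideal_pow I k"
    by (rule Greatest_le_nat[where P = "\<lambda>k. x \<in> ideal_pow I k" and b = N])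
      (auto dest: bound intro: that)
qed

lemma tendsto_SUP_if_lower_bounds:
  fixes g :: "nat \<Rightarrow> real"
  assumes bdd: "bdd_above (g ` {1..})"
    and lower: "\<And>m n. m \<ge> 1 \<Longrightarrow> n \<ge> 1 \<Longrightarrow> g m - real m / real n \<le> g n"
  shows "g \<longlonglongrightarrow> (SUP n\<in>{1..}. g n)"
proof (rule LIMSEQ_I)
  fix r :: real assume r: "r > 0"
  define s where "s = (SUP n\<in>{1..}. g n)"
  obtain m where m: "m \<ge> 1" "s - r / 2 < g m"
    using less_cSUP_iff[OF _ bdd, of "s - r / 2"] r by (auto simp: s_def)
  obtain N :: nat where N: "2 * real m / r < N"
    using reals_Archimedean2 by blast
  have "norm (g n - s) < r" if n: "n \<ge> N + 1" for n
  proof -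
    have "2 * real m < r * real N"
      using N r by (simp add: divide_less_eq mult.commute)
    moreover have "r * real N \<le> r * real n"
      using n r by simp
    ultimately have "2 * real m < real n * r"
      by (simp add: mult.commute)
    then have "real m / real n < r / 2"
      using n by (simp add: divide_less_eq mult.commute)
    then have "s - r < g n"
      using lower[OF m(1), of n] m(2) n by linarith
    moreover have "g n \<le> s"
      using bdd n unfolding s_def by (intro cSUP_upper) auto
    ultimately show ?thesis
      by simp
  qed
  then show "\<exists>no. \<forall>n\<ge>no. norm (g n - (SUP n\<in>{1..}. g n)) < r"
    unfolding s_def by blast
qed

lemma superadditive_ratio_tendsto:
  fixes u :: "nat \<Rightarrow> nat"
  assumes le: "\<And>n. n \<ge> 1 \<Longrightarrow> u n \<le> n"
    and super: "\<And>m n. m \<ge> 1 \<Longrightarrow> n div m * u m \<le> u n"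
  shows "(\<lambda>n. real (u n) / real n) \<longlonglongrightarrow> (SUP n\<in>{1..}. real (u n) / real n)"
proof (rule tendsto_SUP_if_lower_bounds)
  show "bdd_above ((\<lambda>n. real (u n) / real n) ` {1..})"
    using le by (intro bdd_aboveI[of _ 1]) auto
  fix m n :: nat assume m: "m \<ge> 1" and n: "n \<ge> 1"
  have "n \<le> n div m * m + m"
    using mod_less_divisor[of m n] m div_mult_mod_eq[of n m] by linarith
  then have "n * u m \<le> (n div m * m + m) * u m"
    by (rule mult_right_mono) simp
  also have "\<dots> = m * (n div m * u m) + m * u m"
    by (simp add: algebra_simps)
  also have "\<dots> \<le> m * u n + m * m"
    using super[OF m, of n] le[OF m] by (intro add_mono mult_left_mono) auto
  finally have "real n * real (u m) - real m * real m \<le> real m * real (u n)"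
    by (metis of_nat_add of_nat_le_iff of_nat_mult diff_le_eq)
  then have "(real n * real (u m) - real m * real m) / (real m * real n)
      \<le> real m * real (u n) / (real m * real n)"
    by (rule divide_right_mono) simp
  then show "real (u m) / real m - real m / real n \<le> real (u n) / real n"
    using m n by (simp add: diff_divide_distrib)
qed

lemma vbar_gt_one_imp_power_in_pow:
  assumes "vbar I a > 1"
  shows "\<exists>m\<ge>1. a ^ m \<in> ideal_pow I (m + 1)"
proof (rule ccontr)
  assume "\<not> ?thesis"
  then have out: "a ^ m \<notin> ideal_pow I (m + 1)" if "m \<ge> 1" for m
    using that by blast
  define u where "u m = (GREATEST k. a ^ m \<in> ideal_pow I k)" for m
  have u_le: "u m \<le> m" if "m \<ge> 1" for m
    using ideal_pow_Greatest(3)[OF out[OF that]] by (simp add: u_def)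
  have super: "n div m * u m \<le> u n" if m: "m \<ge> 1" for m n
  proof (cases "n = 0")
    case False
    have "a ^ n \<in> ideal_pow I (n div m * u m)"
      using power_div_in_ideal_pow ideal_pow_Greatest(1)[OF out[OF m]] by (simp add: u_def)
    then show ?thesis
      using ideal_pow_Greatest(2)[OF out] False by (simp add: u_def)
  qed simp
  define s where "s = (SUP n\<in>{1..}. real (u n) / real n)"
  have "s \<le> 1"
    unfolding s_def using u_le by (intro cSUP_least) auto
  have "(\<lambda>n. ereal (real (u n) / real n)) \<longlonglongrightarrow> ereal s"
    using superadditive_ratio_tendsto[OF u_le super] by (simp add: s_def)
  moreover have "\<forall>\<^sub>F n in sequentially. ereal (real (u n) / real n)
      = ereal_of_enat (ideal_ord I (a ^ n)) / ereal (real n)"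
    unfolding eventually_sequentially ideal_ord_def u_def using out
    by (intro exI[of _ 1]) (auto simp del: ideal_pow.simps)
  ultimately have "vbar I a = ereal s"
    unfolding vbar_def by (intro limI) (rule Lim_transform_eventually)
  then show False
    using assms \<open>s \<le> 1\<close> by simp
qed

fun weak_subint_coeff :: "nat \<Rightarrow> nat \<Rightarrow> int" where
  "weak_subint_coeff q i =
    (if i = 0 then 1 else if i \<le> q then 0
     else - (\<Sum>j<i. int (i choose j) * weak_subint_coeff q j))"

declare weak_subint_coeff.simps [simp del]

lemma weak_subint_coeff_binomial_sum:
  assumes "q < n"
  shows "(\<Sum>i=1..n. int (n choose i) * weak_subint_coeff q i) = -1"
proof -
  have "(\<Sum>i\<le>n. int (n choose i) * weak_subint_coeff q i)
      = (\<Sum>i<n. int (n choose i) * weak_subint_coeff q i) + weak_subint_coeff q n"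
    by (simp add: lessThan_Suc_atMost[symmetric])
  also have "weak_subint_coeff q n = - (\<Sum>j<n. int (n choose j) * weak_subint_coeff q j)"
    using assms by (subst weak_subint_coeff.simps) simp
  finally have "(\<Sum>i\<le>n. int (n choose i) * weak_subint_coeff q i) = 0"
    by simp
  moreover have "(\<Sum>i\<le>n. int (n choose i) * weak_subint_coeff q i)
      = 1 + (\<Sum>i=1..n. int (n choose i) * weak_subint_coeff q i)"
    by (simp add: atMost_atLeast0 sum.atLeast_Suc_atMost weak_subint_coeff.simps)
  ultimately show ?thesis
    by simp
qed

lemma weak_subint_closure_if_powers_in_pow:
  assumes pow: "\<And>n. q < n \<Longrightarrow> b ^ n \<in> ideal_pow J n"
  shows "b \<in> weak_subint_closure J"
proof -
  define a where "a i = of_int (weak_subint_coeff q i) * b ^ i" for i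
  have "a i \<in> ideal_pow J i" if "i \<ge> 1" for i
  proof (cases "i \<le> q")
    case True
    then show ?thesis
      using that by (simp add: a_def weak_subint_coeff.simps ideal_zero[OF is_ideal_ideal_pow])
  next
    case False
    then show ?thesis
      unfolding a_def by (intro ideal_mult_left[OF is_ideal_ideal_pow] pow) simp
  qed
  moreover have "b ^ n + (\<Sum>i=1..n. of_nat (n choose i) * a i * b ^ (n - i)) = 0"
    if n: "q < n" for n
  proof -
    have "(\<Sum>i=1..n. of_nat (n choose i) * a i * b ^ (n - i))
        = (\<Sum>i=1..n. of_int (int (n choose i) * weak_subint_coeff q i) * b ^ n)"
    proof (rule sum.cong[OF refl])
      fix i assume "i \<in> {1..n}"
      then have "b ^ i * b ^ (n - i) = b ^ n"
        by (simp flip: power_add)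
      then show "of_nat (n choose i) * a i * b ^ (n - i)
          = of_int (int (n choose i) * weak_subint_coeff q i) * b ^ n"
        by (simp add: a_def mult.assoc)
    qed
    also have "\<dots> = of_int (\<Sum>i=1..n. int (n choose i) * weak_subint_coeff q i) * b ^ n"
      by (simp add: sum_distrib_right)
    also have "\<dots> = - (b ^ n)"
      using weak_subint_coeff_binomial_sum[OF n] by simp
    finally show ?thesis
      by simp
  qed
  ultimately show ?thesis
    unfolding weak_subint_closure_def by (intro CollectI exI[of _ q] exI[of _ a]) auto
qed

lemma power_in_pow_of_reduction:
  assumes red: "\<And>N. ideal_pow I N \<subseteq> ideal_pow J (N - R)"
    and m: "m \<ge> 1" "a ^ m \<in> ideal_pow I (m + 1)"
    and n: "m * (R + m) < n"
  shows "a ^ n \<in> ideal_pow J n"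
proof -
  have "R + m \<le> n div m"
    using n m by (metis less_imp_le_nat div_le_mono nonzero_mult_div_cancel_left not_one_le_zero)
  moreover have "n < n div m * m + m"
    using mod_less_divisor[of m n] m div_mult_mod_eq[of n m] by linarith
  ultimately have "n \<le> n div m * (m + 1) - R"
    by (simp add: algebra_simps)
  moreover have "a ^ n \<in> ideal_pow J (n div m * (m + 1) - R)"
    using red power_div_in_ideal_pow[OF m(2)] by blast
  ultimately show ?thesis
    using ideal_pow_antimono by blast
qed

theorem corollary4p5:
  fixes I :: "'a::comm_ring_1 set"
  assumes "noetherian_ring TYPE('a)"
    and "is_ideal I"
  shows "I_gt I \<subseteq> \<Inter>(weak_subint_closure ` min_reductions I)"
proof -
  obtain F where F: "finite F" "I = ideal_gen F"
    using assms unfolding noetherian_ring_def by blast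
  have "a \<in> weak_subint_closure J" if a: "a \<in> I_gt I" and J: "J \<in> min_reductions I" for a J
  proof -
    have "F \<subseteq> ideal_int_closure J"
      using J ideal_gen_superset[of F] ideal_subset_int_closure[OF assms(2)]
      unfolding min_reductions_def is_reduction_def F(2)[symmetric] by blast
    then obtain R where R: "\<And>N. ideal_pow I N \<subseteq> ideal_pow J (N - R)"
      using pow_subset_shifted_pow_if_integral[OF F(1)] F(2) by blast
    obtain m where m: "m \<ge> 1" "a ^ m \<in> ideal_pow I (m + 1)"
      using a vbar_gt_one_imp_power_in_pow unfolding I_gt_def by blast
    show ?thesis
      using power_in_pow_of_reduction[OF R m] by (rule weak_subint_closure_if_powers_in_pow)
  qed
  then show ?thesis
    by blast
qed

end
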